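(* Let $\psi\in\mathfrak M^+_\infty$, $\beta\in\mathbb R$, and let $n\in\mathbb N$ satisfy $\eta(n)-n\ge a>1$, $\mu(n)\ge b>2$. Define $$\Psi^*_{\beta,n}(t)=\psi(n)\sum_{k=2n-[\eta(n)]+1}^{n-1}\Big(1-\frac{n-k}{[\eta(n)]-n}\Big)\cos\Big(kt-\frac{\beta\pi}2\Big)+\sum_{k=n}^\infty\psi(k)\cos\Big(kt-\frac{\beta\pi}2\Big),$$ where $[\cdot]$ is the integer part. Then: (i) for $0<|t|\le\pi$, $\displaystyle|\Psi^*_{\beta,n}(t)|\le\pi^2\Big(\frac{2(b+1)^2}{b^2}+\frac{a}{a-1}\Big)\frac{\psi(n)}{\eta(n)-n}\,\frac1{t^2}$; (ii) for all $t\in\mathbb R$, $\displaystyle|\Psi^*_{\beta,n}(t)|\le\Big(\frac{2b}{b-2}+\frac1a+\frac12\Big)\psi(n)(\eta(n)-n)$; (iii) for every $1\le q\le\infty$, $\displaystyle\|\Psi^*_{\beta,n}\|_q\le2(1+\pi^2)\Big(\frac{2b}{b-2}+\frac{a}{a-1}\Big)\psi(n)(\eta(n)-n)^{1-1/q}$, where the norm is taken over one period.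
   Context: Let $\mathfrak M$ be the set of positive, continuous, convex-downward functions $\psi(t)$ of $t\ge1$ with $\lim_{t\to\infty}\psi(t)=0$. For $\psi\in\mathfrak M$ put $\eta(t)=\eta(\psi;t)=\psi^{-1}(\psi(t)/2)$, where $\psi^{-1}$ is the inverse function of $\psi$, and $\mu(t)=\mu(\psi;t)=t/(\eta(t)-t)$. Let $\mathfrak M^+_\infty$ be the set of $\psi\in\mathfrak M$ for which $\mu(\psi;t)$ increases monotonically to $\infty$ as $t\to\infty$. $\|g\|_q=(\int_0^{2\pi}|g|^q)^{1/q}$ for $1\le q<\infty$ and $\|g\|_\infty=\operatorname{ess\,sup}|g|$. *)

theory Defs
  imports "HOL-Analysis.Analysis" "HOL-Probability.Essential_Supremum"
begin

definition classM :: "(real \<Rightarrow> real) \<Rightarrow> bool" where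
  "classM \<psi> \<longleftrightarrow> (\<forall>t\<ge>1. \<psi> t > 0) \<and> continuous_on {1..} \<psi> \<and> convex_on {1..} \<psi>
     \<and> (\<psi> \<longlongrightarrow> 0) at_top"

definition eta :: "(real \<Rightarrow> real) \<Rightarrow> real \<Rightarrow> real" where
  "eta \<psi> t = inv_into {1..} \<psi> (\<psi> t / 2)"

definition mu :: "(real \<Rightarrow> real) \<Rightarrow> real \<Rightarrow> real" where
  "mu \<psi> t = t / (eta \<psi> t - t)"

definition classMplus_inf :: "(real \<Rightarrow> real) \<Rightarrow> bool" where
  "classMplus_inf \<psi> \<longleftrightarrow> classM \<psi> \<and> mono_on {1..} (mu \<psi>) \<and> filterlim (mu \<psi>) at_top at_top"

definition Psi_star :: "(real \<Rightarrow> real) \<Rightarrow> real \<Rightarrow> nat \<Rightarrow> real \<Rightarrow> real" where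
  "Psi_star \<psi> \<beta> n t =
     \<psi> (real n) * (\<Sum>k\<in>{2 * int n - \<lfloor>eta \<psi> (real n)\<rfloor> + 1 .. int n - 1}.
        (1 - real_of_int (int n - k) / real_of_int (\<lfloor>eta \<psi> (real n)\<rfloor> - int n))
          * cos (real_of_int k * t - \<beta> * pi / 2))
   + (\<Sum>j. \<psi> (real (j + n)) * cos (real (j + n) * t - \<beta> * pi / 2))"

end

theory Submission
  imports Defs
begin

text \<open>
  With $L = \eta(n) - n$, $m = \lfloor L\rfloor$ and $p = n - m$, the function
  $\Psi^*_{\beta,n}$ is a cosine series $\sum_j c_j \cos((j+p)t - \beta\pi/2)$ whose coefficients
  rise linearly to $\psi(n)$ and then follow the convex sequence $\psi(j+p)$.
  \<^item> Summation by parts twice gives $4\sin^2(t/2)\,|\Psi^*_{\beta,n}(t)| \le \sum_j|\Delta^2 c_j|$, and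
    this total variation is $O(\psi(n)/L)$ because $\mu$ is nondecreasing; Jordan's inequality then
    yields the decay estimate (i).
  \<^item> Summing $\psi$ between the successive halving points $\eta^j(n)$, whose gaps grow at most like
    $L(1+1/b)^j$, bounds $\sum_{k\ge n}\psi(k)$ by $O(\psi(n)L)$; with the linear part this gives (ii).
  \<^item> A continuous periodic function of height $A$ and width $1/k$ in the sense of (i) and (ii) has
    $L^q$ norm at most $A^{1-1/q}(2\pi A/k)^{1/q}$ (a general lemma proved with an explicit
    integrable majorant), which yields (iii), and (ii) gives the case $q = \infty$.
\<close>

lemma convex_on_three_point:
  fixes f :: "real \<Rightarrow> real"
  assumes "convex_on S f" "x \<in> S" "z \<in> S" "x < y" "y < z"
  shows "f y * (z - x) \<le> (z - y) * f x + (y - x) * f z"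
proof -
  define u where "u = (y - x) / (z - x)"
  have u: "0 \<le> u" "u \<le> 1" and uz: "u * (z - x) = y - x"
    using assms by (auto simp: u_def field_simps)
  have "(1 - u) *\<^sub>R x + u *\<^sub>R z = y"
    using uz by (simp add: algebra_simps)
  hence "f y \<le> (1 - u) * f x + u * f z"
    using convex_onD[OF assms(1) u assms(2,3)] by simp
  hence "f y * (z - x) \<le> ((1 - u) * f x + u * f z) * (z - x)"
    using assms by (intro mult_right_mono) auto
  also have "\<dots> = (z - x) * f x + (u * (z - x)) * (f z - f x)"
    by (simp add: algebra_simps)
  finally show ?thesis
    unfolding uz by (simp add: algebra_simps)
qed

text \<open>Jordan's inequality; it turns the kernel $4\sin^2(t/2)$ into the lower bound $4t^2/\pi^2$.\<close>
lemma jordan_inequality: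
  assumes "0 \<le> x" "x \<le> pi / 2"
  shows "2 * x / pi \<le> sin x"
proof -
  have "convex_on {0..pi} (\<lambda>x. - sin x)"
  proof (rule f''_ge0_imp_convex[where f' = "\<lambda>x. - cos x" and f'' = "\<lambda>x. sin x"])
    show "\<And>x. x \<in> {0..pi} \<Longrightarrow> ((\<lambda>x. - sin x) has_real_derivative - cos x) (at x)"
      and "\<And>x. x \<in> {0..pi} \<Longrightarrow> ((\<lambda>x. - cos x) has_real_derivative sin x) (at x)"
      by (auto intro!: derivative_eq_intros)
    show "\<And>x. x \<in> {0..pi} \<Longrightarrow> 0 \<le> sin x" by (auto intro: sin_ge_zero)
  qed simp
  moreover have "0 \<le> 2 * x / pi" "2 * x / pi \<le> 1"
    using assms by (auto simp: field_simps)
  moreover have "(1 - 2 * x / pi) *\<^sub>R 0 + (2 * x / pi) *\<^sub>R (pi / 2) = x"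
    by simp
  ultimately have "- sin x \<le> (1 - 2 * x / pi) * (- sin 0) + (2 * x / pi) * (- sin (pi / 2))"
    using convex_onD[of "{0..pi}" "\<lambda>x. - sin x" "2 * x / pi" 0 "pi / 2"] by force
  thus ?thesis by simp
qed

lemma bound_from_sin_half_square:
  fixes y t S :: real
  assumes "y * (4 * (sin (t / 2))\<^sup>2) \<le> S" "0 \<le> y" "0 < \<bar>t\<bar>" "\<bar>t\<bar> \<le> pi"
  shows "y \<le> pi\<^sup>2 * S / (4 * t\<^sup>2)"
proof -
  have "\<bar>t\<bar> / pi \<le> sin (\<bar>t\<bar> / 2)"
    using jordan_inequality[of "\<bar>t\<bar> / 2"] assms by simp
  also have "sin (\<bar>t\<bar> / 2) = \<bar>sin (t / 2)\<bar>"
    using sin_ge_zero[of "\<bar>t\<bar> / 2"] assms by (cases "t \<ge> 0") auto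
  finally have "(\<bar>t\<bar> / pi)\<^sup>2 \<le> (sin (t / 2))\<^sup>2"
    by (metis abs_ge_zero divide_nonneg_nonneg pi_ge_zero power2_abs power_mono)
  hence "y * (4 * t\<^sup>2 / pi\<^sup>2) \<le> y * (4 * (sin (t / 2))\<^sup>2)"
    using assms(2) by (intro mult_left_mono) (auto simp: power_divide)
  hence "y * (4 * t\<^sup>2 / pi\<^sup>2) \<le> S" using assms(1) by linarith
  moreover have "4 * t\<^sup>2 / pi\<^sup>2 > 0" using assms by simp
  ultimately show ?thesis by (simp add: field_simps)
qed

lemma double_sum_lessThan: "2 * (\<Sum>i<N. real i) = real N * (real N - 1)"
  by (induction N) (auto simp: algebra_simps)

lemma geometric_sum_le:
  fixes r :: real
  assumes "0 \<le> r" "r < 1"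
  shows "(\<Sum>j<J. r ^ j) \<le> 1 / (1 - r)"
proof -
  have "(\<Sum>j<J. r ^ j) = (1 - r ^ J) / (1 - r)" using assms by (simp add: sum_gp_strict)
  also have "\<dots> \<le> 1 / (1 - r)" using assms by (intro divide_right_mono) auto
  finally show ?thesis .
qed

lemma quadratic_count_bound:
  fixes N :: nat and D :: real
  assumes "D > 0" "real N - 1 < D"
  shows "real N - real N * (real N - 1) / (4 * D) \<le> 3 * D / 4 + 1"
proof -
  have "0 \<le> 3 * D\<^sup>2 + 4 * D - 4 * D * real N + real N ^ 2 - real N"
  proof (cases "N \<le> 1")
    case True
    then consider "N = 0" | "N = 1" by linarith
    thus ?thesis using assms by cases auto
  next
    case False
    hence "(D + 1 - real N) * (3 * D - real N) \<ge> 0" using assms by simp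
    thus ?thesis using assms by (simp add: algebra_simps power2_eq_square)
  qed
  thus ?thesis using assms by (simp add: field_simps power2_eq_square)
qed

lemma tent_sum_bound:
  fixes x D :: real
  assumes "0 \<le> x" "0 < D"
  shows "(\<Sum>k\<in>{nat \<lceil>x\<rceil>..<nat \<lceil>x + D\<rceil>}. 1 - (real k - x) / (2 * D)) \<le> 3 * D / 4 + 1"
proof -
  define k0 k1 where "k0 = nat \<lceil>x\<rceil>" and "k1 = nat \<lceil>x + D\<rceil>"
  define N where "N = k1 - k0"
  have k0x: "x \<le> real k0" using assms by (simp add: k0_def)
  have k1x: "real k1 < x + D + 1" using assms by (simp add: k1_def) linarith
  have ND: "real N - 1 < D"
    using k0x k1x assms by (cases "k0 \<le> k1") (auto simp: N_def of_nat_diff)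
  have "(\<Sum>k\<in>{k0..<k1}. 1 - (real k - x) / (2 * D)) = (\<Sum>i<N. 1 - (real (k0 + i) - x) / (2 * D))"
    unfolding N_def by (subst sum.atLeastLessThan_shift_0) (simp add: lessThan_atLeast0 comp_def)
  also have "\<dots> \<le> (\<Sum>i<N. 1 - real i / (2 * D))"
    using k0x assms by (intro sum_mono) (auto simp: divide_right_mono)
  also have "\<dots> = real N - (\<Sum>i<N. real i) / (2 * D)"
    by (simp add: sum_subtractf sum_divide_distrib)
  also have "\<dots> = real N - real N * (real N - 1) / (4 * D)"
    using double_sum_lessThan[of N] by (simp add: eq_divide_eq)
  also have "\<dots> \<le> 3 * D / 4 + 1" by (rule quadratic_count_bound[OF assms(2) ND])
  finally show ?thesis by (simp add: k0_def k1_def)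
qed

section \<open>Summation by parts for cosine series\<close>

text \<open>Second differences of a sequence, with the convention $d(-1) = d(0)$; for sequences
  with $d(0) = 0$ this is the usual second difference of the sequence extended by zero.\<close>
definition second_diff :: "(nat \<Rightarrow> real) \<Rightarrow> nat \<Rightarrow> real" where
  "second_diff d j = d (Suc j) - 2 * d j + d (j - 1)"

lemma summable_times_bounded:
  fixes d c :: "nat \<Rightarrow> real"
  assumes "summable (\<lambda>j. \<bar>d j\<bar>)" "\<And>j. \<bar>c j\<bar> \<le> 1"
  shows "summable (\<lambda>j. d j * c j)"
  by (rule summable_comparison_test'[OF assms(1), of 0]) (simp add: abs_mult mult_left_le assms(2))

lemma cos_neighbours:
  fixes y t \<theta> :: real
  shows "cos ((y - 1) * t - \<theta>) + cos ((y + 1) * t - \<theta>) = 2 * cos t * cos (y * t - \<theta>)"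
proof -
  have "cos ((y - 1) * t - \<theta>) = cos ((y * t - \<theta>) - t)"
    and "cos ((y + 1) * t - \<theta>) = cos ((y * t - \<theta>) + t)"
    by (simp_all add: algebra_simps)
  thus ?thesis by (simp add: cos_add cos_diff)
qed

lemma cosine_series_neighbours:
  fixes d :: "nat \<Rightarrow> real" and x t \<theta> :: real
  assumes sd: "summable (\<lambda>j. \<bar>d j\<bar>)"
  shows "(\<Sum>j. d j * cos ((real j + (x - 1)) * t - \<theta>)) + (\<Sum>j. d j * cos ((real j + (x + 1)) * t - \<theta>))
           = 2 * cos t * (\<Sum>j. d j * cos ((real j + x) * t - \<theta>))"
proof -
  have sm: "summable (\<lambda>j. d j * cos ((real j + y) * t - \<theta>))" for y
    by (rule summable_times_bounded[OF sd]) simp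
  have "(\<lambda>j. d j * cos ((real j + (x - 1)) * t - \<theta>) + d j * cos ((real j + (x + 1)) * t - \<theta>)) sums
          ((\<Sum>j. d j * cos ((real j + (x - 1)) * t - \<theta>)) + (\<Sum>j. d j * cos ((real j + (x + 1)) * t - \<theta>)))"
    by (intro sums_add summable_sums sm)
  moreover have "d j * cos ((real j + (x - 1)) * t - \<theta>) + d j * cos ((real j + (x + 1)) * t - \<theta>)
      = 2 * cos t * (d j * cos ((real j + x) * t - \<theta>))" for j
    using cos_neighbours[of "real j + x" t \<theta>]
    by (simp add: add_diff_eq add.assoc) (metis distrib_left mult.left_commute)
  moreover have "(\<lambda>j. 2 * cos t * (d j * cos ((real j + x) * t - \<theta>))) sums
      (2 * cos t * (\<Sum>j. d j * cos ((real j + x) * t - \<theta>)))"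
    by (intro sums_mult summable_sums sm)
  ultimately show ?thesis using sums_unique2 by simp
qed

lemma second_diff_cosine_sums:
  fixes d :: "nat \<Rightarrow> real" and x t \<theta> :: real
  assumes sd: "summable (\<lambda>j. \<bar>d j\<bar>)" and d0: "d 0 = 0"
  defines "g \<equiv> \<lambda>y. cos (y * t - \<theta>)"
  shows "(\<lambda>j. second_diff d j * g (real j + x)) sums ((2 * cos t - 2) * (\<Sum>j. d j * g (real j + x)))"
proof -
  have sm: "summable (\<lambda>j. d j * g (real j + y))" for y
    unfolding g_def by (rule summable_times_bounded[OF sd]) simp
  define s where "s = (\<Sum>j. d j * g (real j + x))"
  define s1 where "s1 = (\<Sum>j. d j * g (real j + (x - 1)))"
  define s2 where "s2 = (\<Sum>j. d j * g (real j + (x + 1)))"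
  have neighbours: "s1 + s2 = 2 * cos t * s"
    unfolding s_def s1_def s2_def g_def by (rule cosine_series_neighbours[OF sd])
  have s0: "(\<lambda>j. d j * g (real j + x)) sums s"
    using sm[of x] by (simp add: s_def summable_sums)
  have "(\<lambda>j. d j * g (real j + (x - 1))) sums s1"
    using sm[of "x - 1"] by (simp add: s1_def summable_sums)
  from sums_split_initial_segment[OF this, of 1]
  have forward: "(\<lambda>j. d (Suc j) * g (real j + x)) sums s1"
    using d0 by (simp add: algebra_simps)
  have "(\<lambda>j. d j * g (real j + (x + 1))) sums s2"
    using sm[of "x + 1"] by (simp add: s2_def summable_sums)
  hence "(\<lambda>j. d (Suc j - 1) * g (real (Suc j) + x)) sums s2"
    by (simp add: algebra_simps)
  from sums_Suc[where f = "\<lambda>j. d (j - 1) * g (real j + x)", OF this]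
  have backward: "(\<lambda>j. d (j - 1) * g (real j + x)) sums s2"
    using d0 by simp
  have "(\<lambda>j. d (Suc j) * g (real j + x) - 2 * (d j * g (real j + x)) + d (j - 1) * g (real j + x))
          sums (s1 - 2 * s + s2)"
    by (intro sums_add sums_diff sums_mult forward backward s0)
  moreover have "(\<lambda>j. d (Suc j) * g (real j + x) - 2 * (d j * g (real j + x)) + d (j - 1) * g (real j + x))
      = (\<lambda>j. second_diff d j * g (real j + x))"
    by (simp add: fun_eq_iff second_diff_def left_diff_distrib distrib_right)
  moreover have "s1 - 2 * s + s2 = (2 * cos t - 2) * s"
    using neighbours by (simp add: left_diff_distrib)
  ultimately show ?thesis
    by (simp add: s_def)
qed

lemma second_diff_cosine_bound:
  fixes d :: "nat \<Rightarrow> real" and x t \<theta> S :: real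
  assumes "summable (\<lambda>j. \<bar>d j\<bar>)" "d 0 = 0" and var: "\<And>N. (\<Sum>j<N. \<bar>second_diff d j\<bar>) \<le> S"
  shows "\<bar>\<Sum>j. d j * cos ((real j + x) * t - \<theta>)\<bar> * (4 * (sin (t / 2))\<^sup>2) \<le> S"
proof -
  define c where "c j = cos ((real j + x) * t - \<theta>)" for j
  have sD: "summable (\<lambda>j. \<bar>second_diff d j\<bar>)"
    by (rule summableI_nonneg_bounded[where x = S]) (use var in auto)
  have sE: "summable (\<lambda>j. \<bar>second_diff d j * c j\<bar>)"
    by (rule summable_comparison_test'[OF sD, of 0]) (simp add: abs_mult mult_left_le c_def)
  have "\<bar>\<Sum>j. d j * c j\<bar> * (4 * (sin (t / 2))\<^sup>2) = \<bar>(2 * cos t - 2) * (\<Sum>j. d j * c j)\<bar>"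
    using cos_double_sin[of "t / 2"] by (simp add: abs_mult)
  also have "(2 * cos t - 2) * (\<Sum>j. d j * c j) = (\<Sum>j. second_diff d j * c j)"
    using sums_unique[OF second_diff_cosine_sums[OF assms(1,2), of x t \<theta>]] by (simp add: c_def)
  also have "\<bar>\<dots>\<bar> \<le> (\<Sum>j. \<bar>second_diff d j * c j\<bar>)" by (rule summable_rabs[OF sE])
  also have "\<dots> \<le> S"
  proof (rule suminf_le_const[OF sE])
    fix N
    have "(\<Sum>j<N. \<bar>second_diff d j * c j\<bar>) \<le> (\<Sum>j<N. \<bar>second_diff d j\<bar>)"
      by (intro sum_mono) (simp add: abs_mult mult_left_le c_def)
    thus "(\<Sum>j<N. \<bar>second_diff d j * c j\<bar>) \<le> S" using var[of N] by simp
  qed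
  finally show ?thesis by (simp add: c_def)
qed

section \<open>$L^q$ norms of periodic functions with a peak at the origin\<close>

lemma arctan_profile_integral:
  fixes A k c :: real
  assumes "k > 0" "c \<ge> 0"
  shows "((\<lambda>t. 2 * A / (1 + (k * t)\<^sup>2)) has_integral (2 * A / k * arctan (k * c))) {0..c}"
proof -
  have "((\<lambda>t. 2 * A / (1 + (k * t)\<^sup>2)) has_integral (2 * A / k * arctan (k * c) - 2 * A / k * arctan (k * 0))) {0..c}"
  proof (rule fundamental_theorem_of_calculus[OF assms(2)])
    fix x assume "x \<in> {0..c}"
    have "((\<lambda>t. 2 * A / k * arctan (k * t)) has_real_derivative 2 * A / k * (inverse (1 + (k * x)\<^sup>2) * k)) (at x within {0..c})"
      by (auto intro!: derivative_eq_intros)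
    thus "((\<lambda>t. 2 * A / k * arctan (k * t)) has_vector_derivative 2 * A / (1 + (k * x)\<^sup>2)) (at x within {0..c})"
      using assms by (simp add: has_real_derivative_iff_has_vector_derivative field_simps)
  qed
  thus ?thesis by simp
qed

lemma arctan_profile_integral_reflected:
  fixes A k c :: real
  assumes "k > 0" "c \<ge> 0"
  shows "((\<lambda>t. 2 * A / (1 + (k * (c - t))\<^sup>2)) has_integral (2 * A / k * arctan (k * c))) {0..c}"
proof -
  have "((\<lambda>t. 2 * A / (1 + (k * (c - t))\<^sup>2)) has_integral
          (- (2 * A / k * arctan (k * (c - c)))) - (- (2 * A / k * arctan (k * (c - 0))))) {0..c}"
  proof (rule fundamental_theorem_of_calculus[OF assms(2)])
    fix x assume "x \<in> {0..c}"
    have "((\<lambda>t. - (2 * A / k * arctan (k * (c - t)))) has_real_derivative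
            - (2 * A / k * (inverse (1 + (k * (c - x))\<^sup>2) * (k * (0 - 1))))) (at x within {0..c})"
      by (auto intro!: derivative_eq_intros)
    thus "((\<lambda>t. - (2 * A / k * arctan (k * (c - t)))) has_vector_derivative 2 * A / (1 + (k * (c - x))\<^sup>2)) (at x within {0..c})"
      using assms by (simp add: has_real_derivative_iff_has_vector_derivative field_simps)
  qed
  thus ?thesis by simp
qed

lemma min_le_rational_profile:
  fixes y A k u :: real
  assumes "0 \<le> y" "y \<le> A" "y * u\<^sup>2 \<le> A / k\<^sup>2" "k > 0"
  shows "y \<le> 2 * A / (1 + (k * u)\<^sup>2)"
proof -
  have "k\<^sup>2 * (y * u\<^sup>2) \<le> k\<^sup>2 * (A / k\<^sup>2)" using assms by (intro mult_left_mono) auto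
  hence "y * (k * u)\<^sup>2 \<le> A" using assms by (simp add: power_mult_distrib algebra_simps)
  hence "y * (1 + (k * u)\<^sup>2) \<le> 2 * A" using assms by (simp add: algebra_simps)
  moreover have "1 + (k * u)\<^sup>2 > 0" by (simp add: add_pos_nonneg)
  ultimately show ?thesis by (simp add: field_simps)
qed

definition twin_peak :: "real \<Rightarrow> real \<Rightarrow> real \<Rightarrow> real" where
  "twin_peak A k t = 2 * A / (1 + (k * t)\<^sup>2) + 2 * A / (1 + (k * (2 * pi - t))\<^sup>2)"

lemma twin_peak_integral:
  assumes "k > 0"
  shows "(twin_peak A k has_integral 4 * A / k * arctan (2 * pi * k)) {0..2 * pi}"
proof -
  have sum: "2 * A / k * arctan (k * (2 * pi)) + 2 * A / k * arctan (k * (2 * pi))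
      = 4 * A / k * arctan (2 * pi * k)"
    by (simp add: algebra_simps)
  have "(twin_peak A k has_integral 2 * A / k * arctan (k * (2 * pi)) + 2 * A / k * arctan (k * (2 * pi))) {0..2 * pi}"
    unfolding twin_peak_def[abs_def]
    by (intro has_integral_add arctan_profile_integral arctan_profile_integral_reflected assms) auto
  thus ?thesis unfolding sum .
qed

lemma twin_peak_majorant:
  fixes f :: "real \<Rightarrow> real" and A k :: real
  assumes periodic: "\<And>t. f (t - 2 * pi) = f t"
    and bdd: "\<And>t. \<bar>f t\<bar> \<le> A"
    and peak: "\<And>t. \<bar>t\<bar> \<le> pi \<Longrightarrow> \<bar>f t\<bar> * t\<^sup>2 \<le> A / k\<^sup>2"
    and k: "k > 0" and t: "t \<in> {0..2 * pi}"
  shows "\<bar>f t\<bar> \<le> twin_peak A k t"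
proof -
  have A: "0 \<le> A" using bdd[of t] by simp
  have nonneg: "0 \<le> 2 * A / (1 + (k * u)\<^sup>2)" for u
    using A by (simp add: add_pos_nonneg less_imp_le)
  show ?thesis
  proof (cases "t \<le> pi")
    case True
    hence "\<bar>f t\<bar> \<le> 2 * A / (1 + (k * t)\<^sup>2)"
      using t by (intro min_le_rational_profile bdd peak k) auto
    thus ?thesis using nonneg[of "2 * pi - t"] by (simp add: twin_peak_def)
  next
    case False
    hence "\<bar>f (t - 2 * pi)\<bar> * (t - 2 * pi)\<^sup>2 \<le> A / k\<^sup>2"
      using t by (intro peak) auto
    hence "\<bar>f t\<bar> * (2 * pi - t)\<^sup>2 \<le> A / k\<^sup>2"
      by (simp add: periodic power2_commute)
    hence "\<bar>f t\<bar> \<le> 2 * A / (1 + (k * (2 * pi - t))\<^sup>2)"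
      by (intro min_le_rational_profile bdd k) auto
    thus ?thesis using nonneg[of t] by (simp add: twin_peak_def)
  qed
qed

lemma integral_powr_le_majorant:
  fixes f h :: "real \<Rightarrow> real" and A I q c d :: real
  assumes cont: "continuous_on {c..d} f"
    and bdd: "\<And>t. t \<in> {c..d} \<Longrightarrow> \<bar>f t\<bar> \<le> A"
    and maj: "\<And>t. t \<in> {c..d} \<Longrightarrow> \<bar>f t\<bar> \<le> h t"
    and h: "(h has_integral I) {c..d}" and q: "1 \<le> q"
  shows "(LINT t:{c..d}|lborel. \<bar>f t\<bar> powr q) \<le> A powr (q - 1) * I"
proof -
  have "continuous_on {c..d} (\<lambda>t. \<bar>f t\<bar> powr q)"
    using q by (intro continuous_on_powr' continuous_intros cont) auto
  hence si: "set_integrable lborel {c..d} (\<lambda>t. \<bar>f t\<bar> powr q)"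
    by (rule borel_integrable_atLeastAtMost')
  have pointwise: "\<bar>f t\<bar> powr q \<le> A powr (q - 1) * h t" if t: "t \<in> {c..d}" for t
  proof (cases "f t = 0")
    case False
    have "\<bar>f t\<bar> powr q = \<bar>f t\<bar> powr (q - 1) * \<bar>f t\<bar>"
      using powr_mult_base[of "\<bar>f t\<bar>" "q - 1"] by (simp add: mult.commute)
    also have "\<dots> \<le> A powr (q - 1) * h t"
      using False q bdd[OF t] maj[OF t] by (intro mult_mono powr_mono2) auto
    finally show ?thesis .
  next
    case True
    thus ?thesis using q maj[OF t] by simp
  qed
  have "(LINT t:{c..d}|lborel. \<bar>f t\<bar> powr q) = integral {c..d} (\<lambda>t. \<bar>f t\<bar> powr q)"
    by (rule set_borel_integral_eq_integral(2)[OF si])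
  also have "\<dots> \<le> integral {c..d} (\<lambda>t. A powr (q - 1) * h t)"
    using pointwise set_borel_integral_eq_integral(1)[OF si] h
    by (intro integral_le integrable_on_mult_right) (auto intro: has_integral_integrable)
  also have "\<dots> = A powr (q - 1) * I"
    using integral_unique[OF h] by simp
  finally show ?thesis .
qed

lemma Lq_norm_peaked_periodic:
  fixes f :: "real \<Rightarrow> real" and A k q :: real
  assumes cont: "continuous_on UNIV f"
    and periodic: "\<And>t. f (t - 2 * pi) = f t"
    and bdd: "\<And>t. \<bar>f t\<bar> \<le> A"
    and peak: "\<And>t. \<bar>t\<bar> \<le> pi \<Longrightarrow> \<bar>f t\<bar> * t\<^sup>2 \<le> A / k\<^sup>2"
    and k: "k > 0" and q: "1 \<le> q"
  shows "(LINT t:{0..2*pi}|lborel. \<bar>f t\<bar> powr q) powr (1 / q)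
           \<le> A powr (1 - 1 / q) * (2 * pi * A / k) powr (1 / q)"
proof -
  have A: "0 \<le> A" using bdd[of 0] by simp
  have maj: "\<bar>f t\<bar> \<le> twin_peak A k t" if "t \<in> {0..2 * pi}" for t
    by (rule twin_peak_majorant[OF periodic bdd peak k that])
  have "(LINT t:{0..2*pi}|lborel. \<bar>f t\<bar> powr q) \<le> A powr (q - 1) * (4 * A / k * arctan (2 * pi * k))"
    by (rule integral_powr_le_majorant[OF continuous_on_subset[OF cont subset_UNIV] bdd maj
          twin_peak_integral[OF k] q])
  also have "\<dots> \<le> A powr (q - 1) * (4 * A / k * (pi / 2))"
    using arctan_ubound[of "2 * pi * k"] A k by (intro mult_left_mono) auto
  also have "\<dots> = A powr (q - 1) * (2 * pi * A / k)"
    by simp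
  finally have "(LINT t:{0..2*pi}|lborel. \<bar>f t\<bar> powr q) \<le> A powr (q - 1) * (2 * pi * A / k)" .
  hence "(LINT t:{0..2*pi}|lborel. \<bar>f t\<bar> powr q) powr (1 / q) \<le> (A powr (q - 1) * (2 * pi * A / k)) powr (1 / q)"
    using q by (intro powr_mono2) (auto simp: set_lebesgue_integral_def)
  also have "\<dots> = (A powr (q - 1)) powr (1 / q) * (2 * pi * A / k) powr (1 / q)"
    by (rule powr_mult)
  also have "(A powr (q - 1)) powr (1 / q) = A powr (1 - 1 / q)"
    using q by (simp add: powr_powr diff_divide_distrib)
  finally show ?thesis .
qed

section \<open>The class $\mathfrak M$\<close>

locale class_M =
  fixes \<psi> :: "real \<Rightarrow> real"
  assumes classM: "classM \<psi>"
begin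

lemma psi_pos: "1 \<le> t \<Longrightarrow> 0 < \<psi> t"
  and psi_continuous: "continuous_on {1..} \<psi>"
  and psi_convex: "convex_on {1..} \<psi>"
  and psi_tendsto_zero: "(\<psi> \<longlongrightarrow> 0) at_top"
  using classM by (auto simp: classM_def)

lemma three_point:
  assumes "1 \<le> x" "x < y" "y < z"
  shows "\<psi> y * (z - x) \<le> (z - y) * \<psi> x + (y - x) * \<psi> z"
  using convex_on_three_point[OF psi_convex, of x z y] assms by simp

lemma strictly_decreasing:
  assumes "1 \<le> x" "x < y"
  shows "\<psi> y < \<psi> x"
proof (rule ccontr)
  assume "\<not> \<psi> y < \<psi> x"
  hence le: "\<psi> x \<le> \<psi> y" by simp
  have above: "\<psi> y \<le> \<psi> z" if "y < z" for z
  proof -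
    have "\<psi> y * (z - x) \<le> (z - y) * \<psi> x + (y - x) * \<psi> z"
      by (rule three_point[OF assms that])
    moreover have "(z - y) * \<psi> x \<le> (z - y) * \<psi> y"
      using le that by (intro mult_left_mono) auto
    ultimately have "(y - x) * \<psi> y \<le> (y - x) * \<psi> z"
      by (simp add: algebra_simps)
    thus ?thesis using assms by simp
  qed
  have "0 < \<psi> y" using psi_pos assms by simp
  hence "eventually (\<lambda>z. \<psi> z < \<psi> y) at_top"
    using order_tendstoD(2)[OF psi_tendsto_zero] by blast
  then obtain Z where "\<And>z. Z \<le> z \<Longrightarrow> \<psi> z < \<psi> y"
    by (auto simp: eventually_at_top_linorder)
  hence "\<psi> (max Z (y + 1)) < \<psi> y" by simp
  moreover have "\<psi> y \<le> \<psi> (max Z (y + 1))" by (rule above) simp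
  ultimately show False by simp
qed

lemma decreasing: "1 \<le> x \<Longrightarrow> x \<le> y \<Longrightarrow> \<psi> y \<le> \<psi> x"
  using strictly_decreasing[of x y] by (cases "x = y") auto

lemma eta_props:
  assumes "1 \<le> y"
  shows "1 \<le> eta \<psi> y" "\<psi> (eta \<psi> y) = \<psi> y / 2" "y < eta \<psi> y"
proof -
  have py: "0 < \<psi> y" using psi_pos assms by simp
  hence "eventually (\<lambda>z. \<psi> z < \<psi> y / 2) at_top"
    using order_tendstoD(2)[OF psi_tendsto_zero, of "\<psi> y / 2"] by simp
  then obtain Z where Z: "\<And>z. Z \<le> z \<Longrightarrow> \<psi> z < \<psi> y / 2"
    by (auto simp: eventually_at_top_linorder)
  define z where "z = max Z y"
  have "y \<le> z" "\<psi> z < \<psi> y / 2" using Z by (auto simp: z_def)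
  moreover have "continuous_on {y..z} \<psi>"
    by (rule continuous_on_subset[OF psi_continuous]) (use assms in auto)
  ultimately obtain w where w: "y \<le> w" "\<psi> w = \<psi> y / 2"
    using IVT2'[of \<psi> z "\<psi> y / 2" y] py by fastforce
  have im: "\<psi> y / 2 \<in> \<psi> ` {1..}"
    using w assms by (intro image_eqI[of _ _ w]) auto
  show e1: "1 \<le> eta \<psi> y"
    using inv_into_into[OF im] by (simp add: eta_def)
  show e2: "\<psi> (eta \<psi> y) = \<psi> y / 2"
    using f_inv_into_f[OF im] by (simp add: eta_def)
  show "y < eta \<psi> y"
  proof (rule ccontr)
    assume "\<not> y < eta \<psi> y"
    hence "\<psi> y \<le> \<psi> (eta \<psi> y)" using decreasing[OF e1] by simp
    thus False using e2 py by simp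
  qed
qed

lemma mu_pos: "1 \<le> y \<Longrightarrow> 0 < mu \<psi> y"
  using eta_props[of y] by (simp add: mu_def)

lemma eta_gap: "1 \<le> y \<Longrightarrow> eta \<psi> y - y = y / mu \<psi> y"
  using eta_props[of y] by (simp add: mu_def)

end

text \<open>Functions of $\mathfrak M$ with $\mu$ nondecreasing. This is all of $\mathfrak M^+_\infty$ that the
  estimates use.\<close>
locale class_M_mono_mu = class_M +
  assumes mono_mu: "mono_on {1..} (mu \<psi>)"

locale admissible_index = class_M_mono_mu +
  fixes n :: nat and a b :: real
  assumes n1: "1 \<le> n"
    and gap_ge: "a \<le> eta \<psi> (real n) - real n" and a1: "1 < a"
    and mu_ge: "b \<le> mu \<psi> (real n)" and b2: "2 < b"
begin

definition L :: real where "L = eta \<psi> (real n) - real n"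

definition \<rho> :: real where "\<rho> = 1 + L / real n"

definition \<tau> :: "nat \<Rightarrow> real" where "\<tau> j = (eta \<psi> ^^ j) (real n)"

lemma L_ge_a: "a \<le> L" and L_gt1: "1 < L" and L_pos: "0 < L"
  using gap_ge a1 by (auto simp: L_def)

lemma n_pos: "0 < real n" using n1 by simp

lemma psi_n_pos: "0 < \<psi> (real n)" using psi_pos n1 by simp

lemma mu_n: "mu \<psi> (real n) = real n / L"
  by (simp add: mu_def L_def)

lemma n_ge_bL: "b * L \<le> real n"
  using mu_ge mu_n L_pos by (simp add: field_simps)

lemma rho_bounds: "1 \<le> \<rho>" "\<rho> \<le> 1 + 1 / b"
proof -
  show "1 \<le> \<rho>" using L_pos n_pos by (simp add: \<rho>_def)
  have "L / real n \<le> 1 / b" using n_ge_bL b2 L_pos n_pos by (simp add: field_simps)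
  thus "\<rho> \<le> 1 + 1 / b" by (simp add: \<rho>_def)
qed

text \<open>Since $\mu$ is nondecreasing, $\eta(y) - y = y/\mu(y) \le yL/n$ for $y \ge n$.\<close>
lemma eta_step_le:
  assumes "real n \<le> y"
  shows "eta \<psi> y - y \<le> y * L / real n"
proof -
  have y1: "1 \<le> y" using assms n1 by linarith
  have "mu \<psi> (real n) \<le> mu \<psi> y"
    using assms n1 by (intro mono_onD[OF mono_mu]) auto
  hence "y / mu \<psi> y \<le> y / mu \<psi> (real n)"
    using mu_pos[OF y1] mu_pos[of "real n"] n1 y1 by (intro divide_left_mono) auto
  thus ?thesis using eta_gap[OF y1] mu_n L_pos n_pos by simp
qed

lemma tau_Suc: "\<tau> (Suc j) = eta \<psi> (\<tau> j)"
  by (simp add: \<tau>_def)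

lemma tau_props: "real n \<le> \<tau> j \<and> \<psi> (\<tau> j) = \<psi> (real n) / 2 ^ j \<and> \<tau> j \<le> real n * \<rho> ^ j"
proof (induction j)
  case 0 thus ?case by (simp add: \<tau>_def)
next
  case (Suc j)
  have t1: "1 \<le> \<tau> j" using Suc n1 by linarith
  have "\<tau> (Suc j) \<le> \<tau> j * \<rho>"
    using eta_step_le[of "\<tau> j"] Suc by (simp add: tau_Suc \<rho>_def field_simps)
  also have "\<dots> \<le> real n * \<rho> ^ j * \<rho>"
    using Suc rho_bounds by (intro mult_right_mono) auto
  finally show ?case
    using Suc eta_props[OF t1] by (simp add: tau_Suc mult.commute mult.left_commute)
qed

lemma tau_ge_n: "real n \<le> \<tau> j" and tau_ge1: "1 \<le> \<tau> j"
  and psi_tau: "\<psi> (\<tau> j) = \<psi> (real n) / 2 ^ j"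
  using tau_props[of j] n1 by auto

lemma tau_gap: "0 < \<tau> (Suc j) - \<tau> j" "\<tau> (Suc j) - \<tau> j \<le> L * \<rho> ^ j"
proof -
  show "0 < \<tau> (Suc j) - \<tau> j" using eta_props(3)[OF tau_ge1] by (simp add: tau_Suc)
  have "\<tau> (Suc j) - \<tau> j \<le> \<tau> j * L / real n"
    using eta_step_le[OF tau_ge_n] by (simp add: tau_Suc)
  also have "\<dots> \<le> real n * \<rho> ^ j * L / real n"
    using tau_props[of j] L_pos n_pos by (intro divide_right_mono mult_right_mono) auto
  finally show "\<tau> (Suc j) - \<tau> j \<le> L * \<rho> ^ j" using n_pos by (simp add: mult.commute)
qed

text \<open>Between two halving points $\psi$ lies below the chord, which drops to half the initial value.\<close>
lemma chord_bound:
  assumes "\<tau> j \<le> k" "k < \<tau> (Suc j)"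
  shows "\<psi> k \<le> \<psi> (\<tau> j) * (1 - (k - \<tau> j) / (2 * (\<tau> (Suc j) - \<tau> j)))"
proof (cases "k = \<tau> j")
  case False
  define D where "D = \<tau> (Suc j) - \<tau> j"
  have D: "0 < D" using tau_gap(1) by (simp add: D_def)
  have half: "\<psi> (\<tau> (Suc j)) = \<psi> (\<tau> j) / 2"
    using eta_props(2)[OF tau_ge1] by (simp add: tau_Suc)
  have "\<psi> k * D \<le> (\<tau> (Suc j) - k) * \<psi> (\<tau> j) + (k - \<tau> j) * \<psi> (\<tau> (Suc j))"
    using three_point[OF tau_ge1 _ assms(2)] assms(1) False by (simp add: D_def)
  also have "\<dots> = \<psi> (\<tau> j) * (D - (k - \<tau> j) / 2)"
    unfolding half D_def by (simp add: algebra_simps)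
  finally show ?thesis using D by (simp add: D_def[symmetric] field_simps)
qed simp

section \<open>The tail $\sum_{k \ge n}\psi(k)$\<close>

definition tail_bound :: real where
  "tail_bound = \<psi> (real n) * (3 * L / 4 * (2 * b / (b - 1)) + 2)"

lemma block_bound:
  "(\<Sum>k\<in>{nat \<lceil>\<tau> j\<rceil>..<nat \<lceil>\<tau> (Suc j)\<rceil>}. \<psi> (real k)) \<le> \<psi> (real n) / 2 ^ j * (3 * (L * \<rho> ^ j) / 4 + 1)"
proof -
  define D where "D = \<tau> (Suc j) - \<tau> j"
  have D: "0 < D" using tau_gap(1) by (simp add: D_def)
  have x0: "0 \<le> \<tau> j" using tau_ge1[of j] by simp
  have ts: "\<tau> (Suc j) = \<tau> j + D" by (simp add: D_def)
  have p: "0 < \<psi> (\<tau> j)" using psi_pos[OF tau_ge1] .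
  have "(\<Sum>k\<in>{nat \<lceil>\<tau> j\<rceil>..<nat \<lceil>\<tau> (Suc j)\<rceil>}. \<psi> (real k))
      \<le> (\<Sum>k\<in>{nat \<lceil>\<tau> j\<rceil>..<nat \<lceil>\<tau> j + D\<rceil>}. \<psi> (\<tau> j) * (1 - (real k - \<tau> j) / (2 * D)))"
    unfolding ts
  proof (intro sum_mono)
    fix k assume "k \<in> {nat \<lceil>\<tau> j\<rceil>..<nat \<lceil>\<tau> j + D\<rceil>}"
    hence "\<tau> j \<le> real k" "real k < \<tau> (Suc j)" using x0 D by (auto simp: ts) linarith
    thus "\<psi> (real k) \<le> \<psi> (\<tau> j) * (1 - (real k - \<tau> j) / (2 * D))"
      using chord_bound by (simp add: D_def)
  qed
  also have "\<dots> = \<psi> (\<tau> j) * (\<Sum>k\<in>{nat \<lceil>\<tau> j\<rceil>..<nat \<lceil>\<tau> j + D\<rceil>}. 1 - (real k - \<tau> j) / (2 * D))"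
    by (simp add: sum_distrib_left)
  also have "\<dots> \<le> \<psi> (\<tau> j) * (3 * D / 4 + 1)"
    using tent_sum_bound[OF x0 D] p by (intro mult_left_mono) auto
  also have "\<dots> \<le> \<psi> (\<tau> j) * (3 * (L * \<rho> ^ j) / 4 + 1)"
    using tau_gap(2)[of j] p by (intro mult_left_mono) (auto simp: D_def)
  finally show ?thesis by (simp add: psi_tau)
qed

lemma initial_blocks:
  "(\<Sum>k\<in>{n..<nat \<lceil>\<tau> J\<rceil>}. \<psi> (real k)) \<le> (\<Sum>j<J. \<psi> (real n) / 2 ^ j * (3 * (L * \<rho> ^ j) / 4 + 1))"
proof (induction J)
  case 0 thus ?case by (simp add: \<tau>_def)
next
  case (Suc J)
  have "n \<le> nat \<lceil>\<tau> J\<rceil>" using tau_ge_n[of J] by linarith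
  moreover have "nat \<lceil>\<tau> J\<rceil> \<le> nat \<lceil>\<tau> (Suc J)\<rceil>"
    using tau_gap(1)[of J] by (intro nat_mono ceiling_mono) simp
  ultimately have "(\<Sum>k\<in>{n..<nat \<lceil>\<tau> (Suc J)\<rceil>}. \<psi> (real k))
      = (\<Sum>k\<in>{n..<nat \<lceil>\<tau> J\<rceil>}. \<psi> (real k)) + (\<Sum>k\<in>{nat \<lceil>\<tau> J\<rceil>..<nat \<lceil>\<tau> (Suc J)\<rceil>}. \<psi> (real k))"
    by (simp add: sum.atLeastLessThan_concat)
  thus ?case using Suc block_bound[of J] by simp
qed

text \<open>The block bounds form a geometric series of ratio $\rho/2 < 1$.\<close>
lemma blocks_le_tail_bound: "(\<Sum>j<J. \<psi> (real n) / 2 ^ j * (3 * (L * \<rho> ^ j) / 4 + 1)) \<le> tail_bound"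
proof -
  have "1 / b < 1" using b2 by simp
  hence r: "0 \<le> \<rho> / 2" "\<rho> / 2 < 1" using rho_bounds by auto
  have "1 - \<rho> / 2 \<ge> (b - 1) / (2 * b)" using rho_bounds b2 by (simp add: field_simps)
  hence "1 / (1 - \<rho> / 2) \<le> 2 * b / (b - 1)"
    using b2 r by (simp add: field_simps)
  have "(\<Sum>j<J. \<psi> (real n) / 2 ^ j * (3 * (L * \<rho> ^ j) / 4 + 1))
      = \<psi> (real n) * (3 * L / 4 * (\<Sum>j<J. (\<rho> / 2) ^ j) + (\<Sum>j<J. (1 / 2) ^ j))"
    by (simp add: sum_distrib_left sum.distrib algebra_simps power_divide)
  also have "\<dots> \<le> \<psi> (real n) * (3 * L / 4 * (2 * b / (b - 1)) + 1 / (1 - 1 / 2))"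
    using geometric_sum_le[OF r, of J] geometric_sum_le[of "1/2" J] psi_n_pos L_pos
      \<open>1 / (1 - \<rho> / 2) \<le> 2 * b / (b - 1)\<close>
    by (intro mult_left_mono add_mono) auto
  finally show ?thesis by (simp add: tail_bound_def)
qed

text \<open>The halving points exhaust $[n,\infty)$, since $\psi(\tau_J) = \psi(n)/2^J \to 0$.\<close>
lemma tau_unbounded: "\<exists>J. y \<le> \<tau> J"
proof -
  define y' where "y' = max y 1"
  have py: "0 < \<psi> y'" using psi_pos by (simp add: y'_def)
  obtain J where "\<psi> (real n) / \<psi> y' < 2 ^ J"
    using real_arch_pow[of 2 "\<psi> (real n) / \<psi> y'"] by auto
  hence "\<psi> (\<tau> J) < \<psi> y'" using py by (simp add: psi_tau field_simps)
  hence "y' < \<tau> J" using decreasing[of "\<tau> J" y'] tau_ge1[of J] by (cases "\<tau> J \<le> y'") auto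
  thus ?thesis by (intro exI[of _ J]) (simp add: y'_def)
qed

lemma tail_partial_sums: "(\<Sum>i<K. \<psi> (real (i + n))) \<le> tail_bound"
proof -
  obtain J where "real (n + K) \<le> \<tau> J" using tau_unbounded by blast
  hence J: "n + K \<le> nat \<lceil>\<tau> J\<rceil>" by linarith
  have "(\<Sum>i<K. \<psi> (real (i + n))) = (\<Sum>k\<in>{n..<n+K}. \<psi> (real k))"
    by (subst sum.atLeastLessThan_shift_0) (simp add: lessThan_atLeast0 comp_def add.commute)
  also have "\<dots> \<le> (\<Sum>k\<in>{n..<nat \<lceil>\<tau> J\<rceil>}. \<psi> (real k))"
    using J n1 psi_pos by (intro sum_mono2) (auto intro: less_imp_le)
  also have "\<dots> \<le> tail_bound"
    using initial_blocks[of J] blocks_le_tail_bound[of J] by linarith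
  finally show ?thesis .
qed

lemma tail_summable: "summable (\<lambda>i. \<psi> (real (i + n)))"
  using tail_partial_sums psi_pos n1
  by (intro summableI_nonneg_bounded[where x = tail_bound]) (auto intro: less_imp_le)

lemma tail_sum_le: "(\<Sum>i. \<psi> (real (i + n))) \<le> tail_bound"
  using tail_summable tail_partial_sums by (rule suminf_le_const)

section \<open>$\Psi^*_{\beta,n}$ as a cosine series\<close>

text \<open>With $m = \lfloor L\rfloor$ and $p = n - m$, the function $\Psi^*_{\beta,n}$ is the cosine series
  $\sum_j c_j\cos((j+p)t - \beta\pi/2)$ whose coefficients $c_j$ rise linearly from $0$ to $\psi(n)$ for
  $j \le m$ and then follow $\psi(j+p)$.\<close>
definition m :: nat where "m = nat \<lfloor>L\<rfloor>"

definition p :: nat where "p = n - m"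

lemma m_bounds: "1 \<le> m" "real m \<le> L" "L - 1 < real m"
proof -
  have "1 \<le> \<lfloor>L\<rfloor>" using L_gt1 by linarith
  thus "1 \<le> m" by (simp add: m_def le_nat_iff)
  show "real m \<le> L" "L - 1 < real m" using L_pos by (simp_all add: m_def)
qed

text \<open>The linear part fits below $n$ because $n \ge bL > 2L$.\<close>
lemma m_plus_p: "m + p = n"
proof -
  have "2 * L < b * L" using b2 L_pos by simp
  hence "m < n" using n_ge_bL m_bounds(2) by linarith
  thus ?thesis by (simp add: p_def)
qed

lemma floor_eta: "\<lfloor>eta \<psi> (real n)\<rfloor> = int n + int m"
proof -
  have "eta \<psi> (real n) = real n + L" by (simp add: L_def)
  thus ?thesis using L_pos by (simp add: m_def)
qed

definition coef :: "nat \<Rightarrow> real" where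
  "coef j = (if j \<le> m then \<psi> (real n) * real j / real m else \<psi> (real (j + p)))"

lemma coef_linear: "j \<le> m \<Longrightarrow> coef j = \<psi> (real n) * real j / real m"
  by (simp add: coef_def)

lemma coef_tail: "m \<le> j \<Longrightarrow> coef j = \<psi> (real (j + p))"
proof -
  have "real m + real p = real n" using m_plus_p by (simp flip: of_nat_add)
  thus "m \<le> j \<Longrightarrow> coef j = \<psi> (real (j + p))" using m_bounds(1) by (auto simp: coef_def)
qed

lemma coef_0: "coef 0 = 0"
  by (simp add: coef_def)

lemma coef_nonneg: "0 \<le> coef j"
  using psi_pos[of "real (j + p)"] psi_n_pos m_plus_p m_bounds(1) by (auto simp: coef_def)

lemma coef_shift: "coef (i + m) = \<psi> (real (i + n))"
  using coef_tail[of "i + m"] m_plus_p by (simp add: add.assoc)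

lemma coef_abs_summable: "summable (\<lambda>j. \<bar>coef j\<bar>)"
proof -
  have "summable (\<lambda>i. coef (i + m))" unfolding coef_shift by (rule tail_summable)
  thus ?thesis by (simp add: summable_iff_shift coef_nonneg)
qed

lemma Psi_star_initial_part:
  "\<psi> (real n) * (\<Sum>k\<in>{2 * int n - \<lfloor>eta \<psi> (real n)\<rfloor> + 1 .. int n - 1}.
        (1 - real_of_int (int n - k) / real_of_int (\<lfloor>eta \<psi> (real n)\<rfloor> - int n))
          * cos (real_of_int k * t - \<theta>))
   = (\<Sum>j<m. coef j * cos ((real j + real p) * t - \<theta>))"
proof -
  have range: "{2 * int n - \<lfloor>eta \<psi> (real n)\<rfloor> + 1 .. int n - 1} = {int p + 1 .. int p + int m - 1}"
    using m_plus_p unfolding floor_eta by (simp add: algebra_simps flip: of_nat_add)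
  have width: "real_of_int (\<lfloor>eta \<psi> (real n)\<rfloor> - int n) = real m"
    unfolding floor_eta by simp
  have "(\<Sum>k\<in>{int p + 1 .. int p + int m - 1}. (1 - real_of_int (int n - k) / real m) * cos (real_of_int k * t - \<theta>))
      = (\<Sum>j\<in>{1..<m}. (1 - real_of_int (int n - int (p + j)) / real m) * cos (real (p + j) * t - \<theta>))"
    by (rule sum.reindex_bij_witness[where i = "\<lambda>j. int (p + j)" and j = "\<lambda>k. nat (k - int p)"]) auto
  also have "\<dots> = (\<Sum>j\<in>{1..<m}. coef j * cos ((real j + real p) * t - \<theta>)) / \<psi> (real n)"
    unfolding sum_divide_distrib
  proof (rule sum.cong)
    fix j assume j: "j \<in> {1..<m}"
    hence "real_of_int (int n - int (p + j)) = real m - real j" using m_plus_p by simp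
    thus "(1 - real_of_int (int n - int (p + j)) / real m) * cos (real (p + j) * t - \<theta>)
        = coef j * cos ((real j + real p) * t - \<theta>) / \<psi> (real n)"
      using j m_bounds(1) psi_n_pos by (simp add: coef_linear field_simps add.commute)
  qed simp
  also have "(\<Sum>j\<in>{1..<m}. coef j * cos ((real j + real p) * t - \<theta>)) = (\<Sum>j<m. coef j * cos ((real j + real p) * t - \<theta>))"
  proof -
    have "{..<m} = insert 0 {1..<m}" using m_bounds(1) by auto
    thus ?thesis by (simp add: coef_0)
  qed
  finally show ?thesis unfolding range width using psi_n_pos by simp
qed

lemma Psi_star_series: "Psi_star \<psi> \<beta> n t = (\<Sum>j. coef j * cos ((real j + real p) * t - \<beta> * pi / 2))"
proof -
  have "summable (\<lambda>j. coef j * cos ((real j + real p) * t - \<beta> * pi / 2))"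
    by (rule summable_times_bounded[OF coef_abs_summable]) simp
  hence "(\<Sum>j. coef j * cos ((real j + real p) * t - \<beta> * pi / 2))
      = (\<Sum>i. coef (i + m) * cos ((real (i + m) + real p) * t - \<beta> * pi / 2))
        + (\<Sum>j<m. coef j * cos ((real j + real p) * t - \<beta> * pi / 2))"
    by (rule suminf_split_initial_segment)
  also have "(\<Sum>i. coef (i + m) * cos ((real (i + m) + real p) * t - \<beta> * pi / 2))
      = (\<Sum>i. \<psi> (real (i + n)) * cos (real (i + n) * t - \<beta> * pi / 2))"
    unfolding coef_shift using m_plus_p by (simp add: add.assoc flip: of_nat_add)
  finally show ?thesis unfolding Psi_star_def Psi_star_initial_part by (simp add: add.commute)
qed

section \<open>Total variation of the second differences\<close>

lemma second_diff_coef_0: "second_diff coef 0 = \<psi> (real n) / real m"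
  using m_bounds(1) by (simp add: second_diff_def coef_linear coef_0)

lemma second_diff_coef_linear: "1 \<le> j \<Longrightarrow> j < m \<Longrightarrow> second_diff coef j = 0"
  by (simp add: second_diff_def coef_linear of_nat_diff field_simps)

lemma coef_m: "coef m = \<psi> (real n)" "coef (Suc m) = \<psi> (real n + 1)"
  using coef_shift[of 0] coef_shift[of 1] by (simp_all add: add.commute)

lemma second_diff_coef_m: "second_diff coef m = \<psi> (real n + 1) - \<psi> (real n) - \<psi> (real n) / real m"
proof -
  have "coef (m - 1) = \<psi> (real n) * (real m - 1) / real m"
    using coef_linear[of "m - 1"] m_bounds(1) by (simp add: of_nat_diff)
  thus ?thesis using m_bounds(1) coef_m by (simp add: second_diff_def field_simps)
qed

lemma second_diff_coef_tail:
  assumes "m < j"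
  shows "0 \<le> second_diff coef j"
proof -
  define k where "k = real (j + p)"
  have k1: "1 \<le> k - 1" using assms m_plus_p n1 by (simp add: k_def)
  have eq: "second_diff coef j = \<psi> (k + 1) - 2 * \<psi> k + \<psi> (k - 1)"
    using coef_tail[of "Suc j"] coef_tail[of j] coef_tail[of "j - 1"] assms
    by (simp add: second_diff_def k_def of_nat_diff add_ac)
  have "\<psi> k * ((k + 1) - (k - 1)) \<le> ((k + 1) - k) * \<psi> (k - 1) + (k - (k - 1)) * \<psi> (k + 1)"
    by (rule three_point) (use k1 in auto)
  thus ?thesis unfolding eq by simp
qed

definition var_bound :: real where
  "var_bound = 2 * \<psi> (real n) / real m + 2 * (\<psi> (real n) - \<psi> (real n + 1))"

lemma variation_below_m: "N < m \<Longrightarrow> (\<Sum>j<Suc N. \<bar>second_diff coef j\<bar>) = \<psi> (real n) / real m"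
proof (induction N)
  case 0 thus ?case using second_diff_coef_0 psi_n_pos by simp
next
  case (Suc N) thus ?case using second_diff_coef_linear[of "Suc N"] by simp
qed

text \<open>On the tail the absolute second differences telescope.\<close>
lemma variation_beyond_m:
  "(\<Sum>j<Suc m + k. \<bar>second_diff coef j\<bar>) = var_bound + coef (Suc m + k) - coef (m + k)"
proof (induction k)
  case 0
  have "\<psi> (real n + 1) \<le> \<psi> (real n)" using decreasing[of "real n" "real n + 1"] n1 by simp
  moreover have "0 < \<psi> (real n) / real m" using psi_n_pos m_bounds(1) by simp
  ultimately have "\<bar>second_diff coef m\<bar> = \<psi> (real n) - \<psi> (real n + 1) + \<psi> (real n) / real m"
    unfolding second_diff_coef_m by simp
  moreover have "(\<Sum>j<m. \<bar>second_diff coef j\<bar>) = \<psi> (real n) / real m"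
    using variation_below_m[of "m - 1"] m_bounds(1) by simp
  ultimately show ?case by (simp add: var_bound_def coef_m)
next
  case (Suc k)
  have "\<bar>second_diff coef (Suc m + k)\<bar> = coef (Suc (Suc m + k)) - 2 * coef (Suc m + k) + coef (m + k)"
    using second_diff_coef_tail[of "Suc m + k"] by (simp add: second_diff_def)
  thus ?case using Suc by simp
qed

lemma coef_tail_decreasing: "coef (Suc m + k) \<le> coef (m + k)"
  using coef_shift[of "Suc k"] coef_shift[of k] decreasing[of "real (k + n)" "real (Suc k + n)"] n1
  by (simp add: add_ac)

lemma variation_le: "(\<Sum>j<N. \<bar>second_diff coef j\<bar>) \<le> var_bound"
proof (cases "Suc m \<le> N")
  case True
  then obtain k where "N = Suc m + k" by (metis le_add_diff_inverse)
  thus ?thesis using variation_beyond_m[of k] coef_tail_decreasing[of k] by simp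
next
  case False
  hence "(\<Sum>j<N. \<bar>second_diff coef j\<bar>) \<le> (\<Sum>j<Suc m + 0. \<bar>second_diff coef j\<bar>)"
    by (intro sum_mono2) auto
  thus ?thesis using variation_beyond_m[of 0] coef_tail_decreasing[of 0] by simp
qed

text \<open>$1/m \le a/((a-1)L)$, because $m > L - 1 \ge (a-1)L/a$.\<close>
lemma inverse_m_le: "1 / real m \<le> a / ((a - 1) * L)"
proof -
  have "(a - 1) * L / a \<le> L - 1" using L_ge_a a1 by (simp add: field_simps)
  hence le: "(a - 1) * L / a \<le> real m" using m_bounds(3) by linarith
  have "0 < (a - 1) * L / a" using a1 L_pos by simp
  from le_imp_inverse_le[OF le this] show ?thesis by (simp add: inverse_eq_divide)
qed

text \<open>The first step $\psi(n) - \psi(n+1)$ is $O(\psi(n)/L)$: compare with the point $x < n$ with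
  $\eta(x) \ge n$, using convexity and monotonicity of $\mu$.\<close>
lemma first_step_bound: "\<psi> (real n) - \<psi> (real n + 1) \<le> \<psi> (real n) * (b + 1) / (b * L)"
proof -
  define x where "x = real n * real n / (real n + L)"
  have "2 * L < b * L" using b2 L_pos by simp
  hence n2: "2 < real n" and nL: "L \<le> real n" using n_ge_bL L_gt1 by linarith+
  have "2 * real n \<le> real n * real n" using n2 by (intro mult_right_mono) auto
  hence "real n + L \<le> real n * real n" using nL by linarith
  hence x1: "1 \<le> x" using L_pos n2 by (simp add: x_def field_simps)
  have xn: "x < real n" and nx: "real n - x = real n * L / (real n + L)"
    using L_pos n2 by (simp_all add: x_def field_simps)
  have "mu \<psi> x \<le> mu \<psi> (real n)" using x1 xn by (intro mono_onD[OF mono_mu]) auto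
  hence "x / mu \<psi> (real n) \<le> x / mu \<psi> x"
    using mu_pos[OF x1] x1 by (intro divide_left_mono) auto
  hence "x + x * L / real n \<le> eta \<psi> x" using eta_gap[OF x1] mu_n by simp
  moreover have "x + x * L / real n = real n"
  proof -
    have "x * (real n + L) = real n * real n" using L_pos n2 by (simp add: x_def)
    hence "x + x * L / real n = real n * real n / real n" using n2 by (simp add: field_simps)
    thus ?thesis using n2 by simp
  qed
  ultimately have "\<psi> (eta \<psi> x) \<le> \<psi> (real n)" using decreasing n1 by simp
  hence psi_x: "\<psi> x \<le> 2 * \<psi> (real n)" using eta_props(2)[OF x1] by simp
  have "\<psi> (real n) * (real n + 1 - x) \<le> (real n + 1 - real n) * \<psi> x + (real n - x) * \<psi> (real n + 1)"
    by (rule three_point[OF x1 xn]) simp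
  hence "(real n - x) * (\<psi> (real n) - \<psi> (real n + 1)) \<le> \<psi> (real n)"
    using psi_x by (simp add: algebra_simps)
  hence "\<psi> (real n) - \<psi> (real n + 1) \<le> \<psi> (real n) * (1 / L + 1 / real n)"
    using xn L_pos n2 unfolding nx by (simp add: field_simps)
  also have "\<dots> \<le> \<psi> (real n) * (1 / L + 1 / (b * L))"
    using n_ge_bL b2 L_pos psi_n_pos n_pos by (intro mult_left_mono add_left_mono divide_left_mono) auto
  also have "\<dots> = \<psi> (real n) * (b + 1) / (b * L)" using b2 L_pos by (simp add: field_simps)
  finally show ?thesis .
qed

lemma var_bound_le: "var_bound \<le> 2 * \<psi> (real n) / L * (a / (a - 1) + (b + 1) / b)"
proof -
  have "var_bound = 2 * \<psi> (real n) * (1 / real m) + 2 * (\<psi> (real n) - \<psi> (real n + 1))"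
    by (simp add: var_bound_def)
  also have "\<dots> \<le> 2 * \<psi> (real n) * (a / ((a - 1) * L)) + 2 * (\<psi> (real n) * (b + 1) / (b * L))"
    using inverse_m_le first_step_bound psi_n_pos by (intro add_mono mult_left_mono) auto
  also have "\<dots> = 2 * \<psi> (real n) / L * (a / (a - 1) + (b + 1) / b)"
    using L_pos a1 b2 by (simp add: field_simps)
  finally show ?thesis .
qed

lemma Psi_star_times_sin_half: "\<bar>Psi_star \<psi> \<beta> n t\<bar> * (4 * (sin (t / 2))\<^sup>2) \<le> var_bound"
  unfolding Psi_star_series
  by (rule second_diff_cosine_bound[OF coef_abs_summable coef_0 variation_le])

lemma var_bound_le_decay_constant:
  "var_bound \<le> 4 * ((2 * (b + 1)\<^sup>2 / b\<^sup>2 + a / (a - 1)) * \<psi> (real n) / L)"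
proof -
  define r s where "r = (b + 1) / b" and "s = a / (a - 1)"
  have "1 \<le> r" using b2 by (simp add: r_def)
  hence "r \<le> 4 * r\<^sup>2" by (simp add: power2_eq_square)
  moreover have "0 < s" using a1 by (simp add: s_def)
  ultimately have "s + r \<le> 2 * (2 * r\<^sup>2 + s)" by (simp add: algebra_simps)
  hence "2 * \<psi> (real n) / L * (s + r) \<le> 2 * \<psi> (real n) / L * (2 * (2 * r\<^sup>2 + s))"
    using psi_n_pos L_pos by (intro mult_left_mono) auto
  thus ?thesis
    using var_bound_le by (simp add: r_def s_def power_divide field_simps)
qed

lemma Psi_star_decay:
  assumes "0 < \<bar>t\<bar>" "\<bar>t\<bar> \<le> pi"
  shows "\<bar>Psi_star \<psi> \<beta> n t\<bar> \<le> pi\<^sup>2 * (2 * (b + 1)\<^sup>2 / b\<^sup>2 + a / (a - 1)) * \<psi> (real n) / L * (1 / t\<^sup>2)"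
proof -
  have "\<bar>Psi_star \<psi> \<beta> n t\<bar> \<le> pi\<^sup>2 * var_bound / (4 * t\<^sup>2)"
    by (rule bound_from_sin_half_square[OF Psi_star_times_sin_half abs_ge_zero assms])
  also have "\<dots> \<le> pi\<^sup>2 * (4 * ((2 * (b + 1)\<^sup>2 / b\<^sup>2 + a / (a - 1)) * \<psi> (real n) / L)) / (4 * t\<^sup>2)"
    using var_bound_le_decay_constant by (intro divide_right_mono mult_left_mono) auto
  finally show ?thesis by simp
qed

text \<open>The coefficient sum: the linear part contributes $\psi(n)(m-1)/2$, the tail at most the tail bound.\<close>
lemma coef_sum_le: "(\<Sum>j. coef j) \<le> \<psi> (real n) * (real m - 1) / 2 + tail_bound"
proof -
  have summable: "summable coef" using coef_abs_summable coef_nonneg by simp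
  have "(\<Sum>j<m. coef j) = \<psi> (real n) / real m * (\<Sum>j<m. real j)"
    by (simp add: coef_linear sum_distrib_left)
  also have "(\<Sum>j<m. real j) = real m * (real m - 1) / 2"
    using double_sum_lessThan[of m] by simp
  also have "\<psi> (real n) / real m * (real m * (real m - 1) / 2) = \<psi> (real n) * (real m - 1) / 2"
    using m_bounds(1) by simp
  finally have "(\<Sum>j<m. coef j) = \<psi> (real n) * (real m - 1) / 2" .
  moreover have "(\<Sum>j. coef j) = (\<Sum>i. coef (i + m)) + (\<Sum>j<m. coef j)"
    by (rule suminf_split_initial_segment[OF summable])
  ultimately show ?thesis
    using tail_sum_le unfolding coef_shift by simp
qed

lemma sup_constant: "\<psi> (real n) * (real m - 1) / 2 + tail_bound \<le> (2 * b / (b - 2) + 1 / a + 1 / 2) * \<psi> (real n) * L"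
proof -
  define u where "u = b * L / (b - 1)"
  have "(real m - 1) / 2 \<le> L / 2 - 1 / 2" using m_bounds(2) by simp
  moreover have "1 \<le> L / a" using L_ge_a a1 by simp
  moreover have "2 * u \<le> 2 * b / (b - 2) * L"
  proof -
    have "2 * b * L / (b - 1) \<le> 2 * b * L / (b - 2)" using b2 L_pos by (intro divide_left_mono) auto
    thus ?thesis by (simp add: u_def)
  qed
  moreover have "1 / 2 \<le> u / 2"
  proof -
    have "b - 1 \<le> b * L" using b2 L_gt1 by (smt (verit) mult_le_cancel_left1)
    thus ?thesis using b2 by (simp add: u_def field_simps)
  qed
  ultimately have "(real m - 1) / 2 + (3 / 2 * u + 2) \<le> 2 * b / (b - 2) * L + L / a + L / 2"
    by linarith
  hence "\<psi> (real n) * ((real m - 1) / 2 + (3 / 2 * u + 2)) \<le> \<psi> (real n) * (2 * b / (b - 2) * L + L / a + L / 2)"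
    using psi_n_pos by (intro mult_left_mono) auto
  moreover have "tail_bound = \<psi> (real n) * (3 / 2 * u + 2)"
    using b2 by (simp add: tail_bound_def u_def field_simps)
  ultimately show ?thesis by (simp add: algebra_simps)
qed

lemma Psi_star_bounded: "\<bar>Psi_star \<psi> \<beta> n t\<bar> \<le> (2 * b / (b - 2) + 1 / a + 1 / 2) * \<psi> (real n) * L"
proof -
  have summable: "summable (\<lambda>j. \<bar>coef j * cos ((real j + real p) * t - \<beta> * pi / 2)\<bar>)"
    using summable_times_bounded[OF coef_abs_summable, of "\<lambda>j. \<bar>cos ((real j + real p) * t - \<beta> * pi / 2)\<bar>"]
    by (simp add: abs_mult coef_nonneg)
  have "\<bar>Psi_star \<psi> \<beta> n t\<bar> \<le> (\<Sum>j. \<bar>coef j * cos ((real j + real p) * t - \<beta> * pi / 2)\<bar>)"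
    unfolding Psi_star_series by (rule summable_rabs[OF summable])
  also have "\<dots> \<le> (\<Sum>j. coef j)"
    using summable coef_abs_summable coef_nonneg by (intro suminf_le) (auto simp: abs_mult mult_left_le)
  also have "\<dots> \<le> (2 * b / (b - 2) + 1 / a + 1 / 2) * \<psi> (real n) * L"
    using coef_sum_le sup_constant by linarith
  finally show ?thesis .
qed


text \<open>$\Psi^*_{\beta,n}$ is continuous (a uniformly convergent cosine series) and $2\pi$-periodic.\<close>
lemma Psi_star_continuous: "continuous_on UNIV (Psi_star \<psi> \<beta> n)"
proof -
  have ul: "uniform_limit UNIV (\<lambda>N t. \<Sum>j<N. coef j * cos ((real j + real p) * t - \<beta> * pi / 2))
      (\<lambda>t. \<Sum>j. coef j * cos ((real j + real p) * t - \<beta> * pi / 2)) sequentially"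
    using coef_abs_summable by (intro Weierstrass_m_test) (auto simp: abs_mult mult_left_le)
  have "continuous_on UNIV (\<lambda>t. \<Sum>j. coef j * cos ((real j + real p) * t - \<beta> * pi / 2))"
    by (rule uniform_limit_theorem[OF _ ul]) (intro always_eventually allI continuous_intros, simp)
  thus ?thesis by (simp add: Psi_star_series[abs_def])
qed

lemma Psi_star_periodic: "Psi_star \<psi> \<beta> n (t - 2 * pi) = Psi_star \<psi> \<beta> n t"
proof -
  have "cos ((real j + real p) * (t - 2 * pi) - \<beta> * pi / 2) = cos ((real j + real p) * t - \<beta> * pi / 2)" for j
  proof -
    have "(real j + real p) * (t - 2 * pi) - \<beta> * pi / 2
        = ((real j + real p) * t - \<beta> * pi / 2) + 2 * pi * of_int (- int (j + p))"
      by (simp add: algebra_simps)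
    thus ?thesis by (simp only: cos_add cos_int_2pin sin_int_2pin)
  qed
  thus ?thesis unfolding Psi_star_series by simp
qed

lemma Lq_constant: "0 < 2 * b / (b - 2) + a / (a - 1)"
  "2 * b / (b - 2) + 1 / a + 1 / 2 \<le> 2 * b / (b - 2) + a / (a - 1)"
  "2 * (b + 1)\<^sup>2 / b\<^sup>2 + a / (a - 1) \<le> 2 * b / (b - 2) + a / (a - 1)"
proof -
  show "0 < 2 * b / (b - 2) + a / (a - 1)" using a1 b2 by (simp add: add_pos_pos)
  have "1 / a \<le> 1 / (a - 1)" using a1 by (intro divide_left_mono) auto
  moreover have "a / (a - 1) = 1 + 1 / (a - 1)" using a1 by (simp add: field_simps)
  ultimately show "2 * b / (b - 2) + 1 / a + 1 / 2 \<le> 2 * b / (b - 2) + a / (a - 1)" by linarith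
  have "(b + 1)\<^sup>2 * (b - 2) = b\<^sup>2 * b - 3 * b - 2" by (simp add: power2_eq_square algebra_simps)
  hence "(b + 1)\<^sup>2 * (b - 2) \<le> b\<^sup>2 * b" using b2 by simp
  hence "2 * (b + 1)\<^sup>2 / b\<^sup>2 \<le> 2 * b / (b - 2)" using b2 by (simp add: field_simps)
  thus "2 * (b + 1)\<^sup>2 / b\<^sup>2 + a / (a - 1) \<le> 2 * b / (b - 2) + a / (a - 1)" by simp
qed

lemma Psi_star_le_Lq_constant: "\<bar>Psi_star \<psi> \<beta> n t\<bar> \<le> (2 * b / (b - 2) + a / (a - 1)) * \<psi> (real n) * L"
proof -
  have "(2 * b / (b - 2) + 1 / a + 1 / 2) * (\<psi> (real n) * L) \<le> (2 * b / (b - 2) + a / (a - 1)) * (\<psi> (real n) * L)"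
    using Lq_constant(2) psi_n_pos L_pos by (intro mult_right_mono) auto
  thus ?thesis using Psi_star_bounded[of \<beta> t] by (simp add: mult.assoc)
qed

lemma Psi_star_peak:
  assumes "\<bar>t\<bar> \<le> pi"
  shows "\<bar>Psi_star \<psi> \<beta> n t\<bar> * t\<^sup>2 \<le> pi\<^sup>2 * (2 * b / (b - 2) + a / (a - 1)) * \<psi> (real n) / L"
proof (cases "t = 0")
  case False
  have "\<bar>Psi_star \<psi> \<beta> n t\<bar> * t\<^sup>2
      \<le> (pi\<^sup>2 * (2 * (b + 1)\<^sup>2 / b\<^sup>2 + a / (a - 1)) * \<psi> (real n) / L * (1 / t\<^sup>2)) * t\<^sup>2"
    using Psi_star_decay[of t \<beta>] False assms by (intro mult_right_mono) auto
  also have "\<dots> = pi\<^sup>2 * (2 * (b + 1)\<^sup>2 / b\<^sup>2 + a / (a - 1)) * \<psi> (real n) / L"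
    using False by simp
  also have "\<dots> \<le> pi\<^sup>2 * (2 * b / (b - 2) + a / (a - 1)) * \<psi> (real n) / L"
    using Lq_constant(3) psi_n_pos L_pos by (intro divide_right_mono mult_right_mono mult_left_mono) auto
  finally show ?thesis .
qed (use Lq_constant(1) psi_n_pos L_pos in simp)

text \<open>Estimate (iii) for $1 \le q < \infty$: combine (i) and (ii) via the twin peak majorant.\<close>
lemma Psi_star_Lq:
  assumes q: "1 \<le> q"
  shows "(LINT t:{0..2*pi}|lborel. \<bar>Psi_star \<psi> \<beta> n t\<bar> powr q) powr (1 / q)
      \<le> 2 * (1 + pi\<^sup>2) * (2 * b / (b - 2) + a / (a - 1)) * \<psi> (real n) * L powr (1 - 1 / q)"
proof -
  define P where "P = (2 * b / (b - 2) + a / (a - 1)) * \<psi> (real n)"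
  have P: "0 < P" using Lq_constant(1) psi_n_pos by (simp add: P_def)
  have bdd: "\<bar>Psi_star \<psi> \<beta> n t\<bar> \<le> P * L" for t
    using Psi_star_le_Lq_constant by (simp add: P_def)
  have "P * L / (L / pi)\<^sup>2 = pi\<^sup>2 * (2 * b / (b - 2) + a / (a - 1)) * \<psi> (real n) / L"
    using L_pos by (simp add: P_def power2_eq_square field_simps)
  hence peak: "\<bar>Psi_star \<psi> \<beta> n t\<bar> * t\<^sup>2 \<le> P * L / (L / pi)\<^sup>2" if "\<bar>t\<bar> \<le> pi" for t
    using Psi_star_peak[OF that] by simp
  have "(LINT t:{0..2*pi}|lborel. \<bar>Psi_star \<psi> \<beta> n t\<bar> powr q) powr (1 / q)
      \<le> (P * L) powr (1 - 1 / q) * (2 * pi * (P * L) / (L / pi)) powr (1 / q)"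
    using L_pos by (intro Lq_norm_peaked_periodic Psi_star_continuous Psi_star_periodic bdd peak q) simp_all
  also have "\<dots> = P * L powr (1 - 1 / q) * (2 * pi\<^sup>2) powr (1 / q)"
  proof -
    have "2 * pi * (P * L) / (L / pi) = P * (2 * pi\<^sup>2)" using L_pos by (simp add: power2_eq_square)
    hence "(P * L) powr (1 - 1 / q) * (2 * pi * (P * L) / (L / pi)) powr (1 / q)
        = (P powr (1 - 1 / q) * P powr (1 / q)) * L powr (1 - 1 / q) * (2 * pi\<^sup>2) powr (1 / q)"
      by (simp add: powr_mult)
    also have "P powr (1 - 1 / q) * P powr (1 / q) = P" using P by (simp flip: powr_add)
    finally show ?thesis .
  qed
  also have "\<dots> \<le> P * L powr (1 - 1 / q) * (2 * (1 + pi\<^sup>2))"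
  proof -
    have "2 * 2 \<le> pi * pi" using pi_ge_two by (intro mult_mono) auto
    hence "1 \<le> 2 * pi\<^sup>2" by (simp add: power2_eq_square)
    hence "(2 * pi\<^sup>2) powr (1 / q) \<le> (2 * pi\<^sup>2) powr 1" using q by (intro powr_mono) auto
    thus ?thesis using P by (intro mult_left_mono) auto
  qed
  finally show ?thesis by (simp add: P_def mult_ac)
qed

lemma Psi_star_esssup:
  "esssup (restrict_space lborel {0..2*pi}) (\<lambda>t. ereal \<bar>Psi_star \<psi> \<beta> n t\<bar>)
      \<le> ereal (2 * (1 + pi\<^sup>2) * (2 * b / (b - 2) + a / (a - 1)) * \<psi> (real n) * L)"
proof (rule esssup_I)
  have "Psi_star \<psi> \<beta> n \<in> borel_measurable lborel"
    using borel_measurable_continuous_onI[OF Psi_star_continuous] by simp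
  thus "(\<lambda>t. ereal \<bar>Psi_star \<psi> \<beta> n t\<bar>) \<in> borel_measurable (restrict_space lborel {0..2*pi})"
    by (intro borel_measurable_ereal borel_measurable_abs measurable_restrict_space1)
  have "\<bar>Psi_star \<psi> \<beta> n t\<bar> \<le> 2 * (1 + pi\<^sup>2) * ((2 * b / (b - 2) + a / (a - 1)) * \<psi> (real n) * L)" for t
  proof -
    have "0 < (2 * b / (b - 2) + a / (a - 1)) * \<psi> (real n) * L"
      using Lq_constant(1) psi_n_pos L_pos by simp
    moreover have "1 \<le> 2 * (1 + pi\<^sup>2)" by simp
    ultimately show ?thesis
      using Psi_star_le_Lq_constant[of \<beta> t] by (smt (verit) mult_le_cancel_right1)
  qed
  hence "\<bar>Psi_star \<psi> \<beta> n t\<bar> \<le> 2 * (1 + pi\<^sup>2) * (2 * b / (b - 2) + a / (a - 1)) * \<psi> (real n) * L" for t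
    by (simp add: mult.assoc)
  thus "AE t in restrict_space lborel {0..2*pi}. ereal \<bar>Psi_star \<psi> \<beta> n t\<bar>
      \<le> ereal (2 * (1 + pi\<^sup>2) * (2 * b / (b - 2) + a / (a - 1)) * \<psi> (real n) * L)"
    by simp
qed

end

theorem mainTheorem9:
  fixes \<psi> :: "real \<Rightarrow> real" and \<beta> a b :: real and n :: nat
  assumes psi: "classMplus_inf \<psi>"
    and n1: "n \<ge> 1"
    and a: "eta \<psi> (real n) - real n \<ge> a" "a > 1"
    and b: "mu \<psi> (real n) \<ge> b" "b > 2"
  shows "(\<forall>t. 0 < \<bar>t\<bar> \<and> \<bar>t\<bar> \<le> pi \<longrightarrow>
            \<bar>Psi_star \<psi> \<beta> n t\<bar> \<le> pi\<^sup>2 * (2 * (b + 1)\<^sup>2 / b\<^sup>2 + a / (a - 1))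
               * \<psi> (real n) / (eta \<psi> (real n) - real n) * (1 / t\<^sup>2))
       \<and> (\<forall>t. \<bar>Psi_star \<psi> \<beta> n t\<bar> \<le> (2 * b / (b - 2) + 1 / a + 1 / 2)
               * \<psi> (real n) * (eta \<psi> (real n) - real n))
       \<and> (\<forall>q::real. 1 \<le> q \<longrightarrow>
            (LINT t:{0..2*pi}|lborel. \<bar>Psi_star \<psi> \<beta> n t\<bar> powr q) powr (1 / q)
              \<le> 2 * (1 + pi\<^sup>2) * (2 * b / (b - 2) + a / (a - 1)) * \<psi> (real n)
                 * (eta \<psi> (real n) - real n) powr (1 - 1 / q))
       \<and> esssup (restrict_space lborel {0..2*pi}) (\<lambda>t. ereal \<bar>Psi_star \<psi> \<beta> n t\<bar>)
              \<le> ereal (2 * (1 + pi\<^sup>2) * (2 * b / (b - 2) + a / (a - 1)) * \<psi> (real n)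
                 * (eta \<psi> (real n) - real n))"
proof -
  interpret admissible_index \<psi> n a b
    using psi n1 a b by unfold_locales (auto simp: classMplus_inf_def)
  show ?thesis
    using Psi_star_decay Psi_star_bounded Psi_star_Lq Psi_star_esssup unfolding L_def by blast
qed

end
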